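(* Let $\Gamma$ be a distance-regular graph with classical parameters $(D,b,\alpha,\beta)$ such that $b\ge2$ and $D\ge3$. Assume $\Gamma$ has the PLS$(\gamma)$ property for some $\gamma\ge3$, with lines the maximal cliques having at least $\gamma$ vertices. Let $r=[D]$. Then every vertex lies on at least $r$ lines, and a vertex lies on exactly $r$ lines if and only if it is a Delsarte vertex.
   Context: Distance-regular graph with intersection numbers $b_i,c_i$, valency $k=b_0$. For integer $b\ne1$, $[j]=\frac{b^j-1}{b-1}$. Classical parameters $(D,b,\alpha,\beta)$: diameter $D$, $b_i=([D]-[i])(\beta-\alpha[i])$, $c_i=[i](1+\alpha[i-1])$. A partial linear space is an incidence structure of points and lines in which any two distinct points lie on at most one common line; its point graph has points as vertices, adjacent iff on a common line. $\Gamma$ has the PLS$(\gamma)$ property ($\gamma\ge3$) if $\Gamma$ is the point graph of a partial linear space $(V(\Gamma),\mathcal L,\in)$ where $\mathcal L$ is the set of maximal cliques of $\Gamma$ with at least $\gamma$ vertices. A Delsarte clique is a clique with $1+\frac{k}{-\theta_{\min}}$ vertices, $\theta_{\min}$ the smallest adjacency eigenvalue. A Delsarte vertex is a vertex all of whose lines in $\mathcal L$ are Delsarte cliques. *)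

theory Defs
  imports Complex_Main
begin

definition simple_graph :: "'a set \<Rightarrow> ('a \<Rightarrow> 'a \<Rightarrow> bool) \<Rightarrow> bool" where
  "simple_graph V E \<longleftrightarrow> finite V \<and> V \<noteq> {} \<and>
     (\<forall>x y. E x y \<longrightarrow> x \<in> V \<and> y \<in> V) \<and>
     (\<forall>x y. E x y \<longrightarrow> E y x) \<and> (\<forall>x. \<not> E x x)"

fun walk_len :: "('a \<Rightarrow> 'a \<Rightarrow> bool) \<Rightarrow> nat \<Rightarrow> 'a \<Rightarrow> 'a \<Rightarrow> bool" where
  "walk_len E 0 x y = (x = y)"
| "walk_len E (Suc n) x y = (\<exists>z. E x z \<and> walk_len E n z y)"

definition gdist :: "('a \<Rightarrow> 'a \<Rightarrow> bool) \<Rightarrow> 'a \<Rightarrow> 'a \<Rightarrow> nat" where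
  "gdist E x y = (LEAST n. walk_len E n x y)"

definition connected_graph :: "'a set \<Rightarrow> ('a \<Rightarrow> 'a \<Rightarrow> bool) \<Rightarrow> bool" where
  "connected_graph V E \<longleftrightarrow> (\<forall>x\<in>V. \<forall>y\<in>V. \<exists>n. walk_len E n x y)"

definition distance_regular ::
  "'a set \<Rightarrow> ('a \<Rightarrow> 'a \<Rightarrow> bool) \<Rightarrow> nat \<Rightarrow> (nat \<Rightarrow> nat) \<Rightarrow> (nat \<Rightarrow> nat) \<Rightarrow> bool" where
  "distance_regular V E D bs cs \<longleftrightarrow>
     simple_graph V E \<and> connected_graph V E \<and>
     (\<forall>x\<in>V. \<forall>y\<in>V. gdist E x y \<le> D) \<and>
     (\<exists>x\<in>V. \<exists>y\<in>V. gdist E x y = D) \<and>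
     (\<forall>x\<in>V. \<forall>y\<in>V. \<forall>i. gdist E x y = i \<longrightarrow>
        card {z \<in> V. E y z \<and> gdist E x z + 1 = i} = cs i \<and>
        card {z \<in> V. E y z \<and> gdist E x z = i + 1} = bs i)"

text \<open>Gaussian-type number [j] = (b^j - 1)/(b - 1).\<close>
definition qbr :: "int \<Rightarrow> nat \<Rightarrow> real" where
  "qbr b j = (real_of_int b ^ j - 1) / (real_of_int b - 1)"

definition classical_parameters ::
  "nat \<Rightarrow> int \<Rightarrow> real \<Rightarrow> real \<Rightarrow> (nat \<Rightarrow> nat) \<Rightarrow> (nat \<Rightarrow> nat) \<Rightarrow> bool" where
  "classical_parameters D b \<alpha> \<beta> bs cs \<longleftrightarrow> b \<noteq> 1 \<and>
     (\<forall>i\<le>D. real (bs i) = (qbr b D - qbr b i) * (\<beta> - \<alpha> * qbr b i)) \<and>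
     (\<forall>i. 1 \<le> i \<and> i \<le> D \<longrightarrow> real (cs i) = qbr b i * (1 + \<alpha> * qbr b (i - 1)))"

definition adj_eigenvalues :: "'a set \<Rightarrow> ('a \<Rightarrow> 'a \<Rightarrow> bool) \<Rightarrow> real set" where
  "adj_eigenvalues V E = {\<theta>. \<exists>f :: 'a \<Rightarrow> real. (\<exists>x\<in>V. f x \<noteq> 0) \<and>
       (\<forall>x\<in>V. (\<Sum>y\<in>{y\<in>V. E x y}. f y) = \<theta> * f x)}"

definition theta_min :: "'a set \<Rightarrow> ('a \<Rightarrow> 'a \<Rightarrow> bool) \<Rightarrow> real" where
  "theta_min V E = Min (adj_eigenvalues V E)"

definition is_clique :: "'a set \<Rightarrow> ('a \<Rightarrow> 'a \<Rightarrow> bool) \<Rightarrow> 'a set \<Rightarrow> bool" where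
  "is_clique V E C \<longleftrightarrow> C \<subseteq> V \<and> (\<forall>x\<in>C. \<forall>y\<in>C. x \<noteq> y \<longrightarrow> E x y)"

definition maximal_clique :: "'a set \<Rightarrow> ('a \<Rightarrow> 'a \<Rightarrow> bool) \<Rightarrow> 'a set \<Rightarrow> bool" where
  "maximal_clique V E C \<longleftrightarrow> is_clique V E C \<and>
     (\<forall>C'. is_clique V E C' \<and> C \<subseteq> C' \<longrightarrow> C' = C)"

definition glines :: "'a set \<Rightarrow> ('a \<Rightarrow> 'a \<Rightarrow> bool) \<Rightarrow> nat \<Rightarrow> 'a set set" where
  "glines V E \<gamma> = {C. maximal_clique V E C \<and> \<gamma> \<le> card C}"

text \<open>PLS(\<gamma>): the graph is the point graph of the partial linear space (V, glines, \<in>).\<close>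
definition PLS :: "'a set \<Rightarrow> ('a \<Rightarrow> 'a \<Rightarrow> bool) \<Rightarrow> nat \<Rightarrow> bool" where
  "PLS V E \<gamma> \<longleftrightarrow> 3 \<le> \<gamma> \<and>
     (\<forall>x\<in>V. \<forall>y\<in>V. x \<noteq> y \<longrightarrow> card {L \<in> glines V E \<gamma>. x \<in> L \<and> y \<in> L} \<le> 1) \<and>
     (\<forall>x\<in>V. \<forall>y\<in>V. E x y \<longleftrightarrow> x \<noteq> y \<and> (\<exists>L\<in>glines V E \<gamma>. x \<in> L \<and> y \<in> L))"

text \<open>Delsarte clique: a clique with 1 + k/(-\<theta>_min) vertices (k the valency).\<close>
definition delsarte_clique :: "'a set \<Rightarrow> ('a \<Rightarrow> 'a \<Rightarrow> bool) \<Rightarrow> nat \<Rightarrow> 'a set \<Rightarrow> bool" where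
  "delsarte_clique V E k C \<longleftrightarrow> is_clique V E C \<and>
     real (card C) = 1 + real k / (- theta_min V E)"

definition delsarte_vertex :: "'a set \<Rightarrow> ('a \<Rightarrow> 'a \<Rightarrow> bool) \<Rightarrow> nat \<Rightarrow> nat \<Rightarrow> 'a \<Rightarrow> bool" where
  "delsarte_vertex V E \<gamma> k x \<longleftrightarrow> (\<forall>L\<in>glines V E \<gamma>. x \<in> L \<longrightarrow> delsarte_clique V E k L)"

end

theory Submission
  imports Defs "HOL-Computational_Algebra.Polynomial"
begin

text \<open>
  The eigenvalues of a distance-regular graph of diameter \<open>D\<close> are exactly the roots of a
  polynomial of degree \<open>D + 1\<close> obtained from the three-term recurrence of the intersection
  numbers, and each root \<open>\<theta>\<close> has an eigenvector \<open>z \<mapsto> u(d(y, z))\<close> given by its cosine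
  sequence \<open>u\<close>. Positive semidefiniteness of the Gram matrix of these vectors yields Delsarte's
  bound \<open>|C| \<le> 1 + k/(-\<theta>)\<close> for every clique \<open>C\<close> and every negative root \<open>\<theta>\<close>. For classical
  parameters, \<open>-[D]\<close> is a root at which the signed intersection polynomials are all positive,
  and a Sturm-type comparison shows that no root lies below it; so \<open>\<theta>\<^sub>m\<^sub>i\<^sub>n = -[D]\<close>, and
  since \<open>k = [D] \<beta>\<close> every clique has at most \<open>1 + \<beta>\<close> vertices. In a partial linear space the
  lines through a vertex \<open>x\<close> partition its neighbourhood, so \<open>k = \<Sum>\<^sub>L (|L| - 1)\<close> with every
  summand at most \<open>\<beta>\<close>: there are at least \<open>[D]\<close> lines through \<open>x\<close>, with equality exactly
  when all of them are Delsarte cliques.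
\<close>

section \<open>Walks and distances\<close>

lemma walk_len_append:
  "walk_len E m x y \<Longrightarrow> walk_len E n y z \<Longrightarrow> walk_len E (m + n) x z"
  by (induction m arbitrary: x) auto

lemma walk_len_snoc: "walk_len E n x y \<Longrightarrow> E y z \<Longrightarrow> walk_len E (Suc n) x z"
  using walk_len_append[of E n x y 1 z] by simp

lemma walk_len_sym:
  assumes "\<And>x y. E x y \<Longrightarrow> E y x"
  shows "walk_len E n x y \<Longrightarrow> walk_len E n y x"
proof (induction n arbitrary: x)
  case 0
  then show ?case by simp
next
  case (Suc n)
  then obtain z where "E x z" "walk_len E n z y" by auto
  then show ?case using Suc.IH walk_len_snoc assms by metis
qed

locale distance_regular_graph =
  fixes V :: "'a set" and E :: "'a \<Rightarrow> 'a \<Rightarrow> bool" and D :: nat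
    and bs cs :: "nat \<Rightarrow> nat"
  assumes distance_regular: "distance_regular V E D bs cs"
    and diameter_pos: "0 < D"
begin

abbreviation d :: "'a \<Rightarrow> 'a \<Rightarrow> nat" where "d \<equiv> gdist E"

lemma simple: "simple_graph V E"
  using distance_regular unfolding distance_regular_def by auto

lemma finite_V: "finite V" and V_nonempty: "V \<noteq> {}"
  and adj_in_V: "E x y \<Longrightarrow> x \<in> V \<and> y \<in> V"
  and adj_sym: "E x y \<Longrightarrow> E y x" and adj_irrefl: "\<not> E x x"
  using simple unfolding simple_graph_def by auto

lemma walk_exists: "x \<in> V \<Longrightarrow> y \<in> V \<Longrightarrow> \<exists>n. walk_len E n x y"
  using distance_regular unfolding distance_regular_def connected_graph_def by auto

lemma dist_le_diameter: "x \<in> V \<Longrightarrow> y \<in> V \<Longrightarrow> d x y \<le> D"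
  using distance_regular unfolding distance_regular_def by auto

lemma diameter_attained: "\<exists>x\<in>V. \<exists>y\<in>V. d x y = D"
  using distance_regular unfolding distance_regular_def by auto

lemma intersection_numbers:
  assumes "x \<in> V" "y \<in> V" "d x y = i"
  shows "card {z \<in> V. E y z \<and> d x z + 1 = i} = cs i"
    and "card {z \<in> V. E y z \<and> d x z = i + 1} = bs i"
  using distance_regular assms unfolding distance_regular_def by blast+

lemma walk_dist: "x \<in> V \<Longrightarrow> y \<in> V \<Longrightarrow> walk_len E (d x y) x y"
  unfolding gdist_def using walk_exists by (metis LeastI)

lemma dist_le_walk: "walk_len E n x y \<Longrightarrow> d x y \<le> n"
  unfolding gdist_def by (rule Least_le)

lemma dist_sym: "x \<in> V \<Longrightarrow> y \<in> V \<Longrightarrow> d x y = d y x"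
  using walk_dist walk_len_sym[of E] adj_sym dist_le_walk by (metis le_antisym)

lemma dist_self [simp]: "d x x = 0"
  using dist_le_walk[of 0 x x] by simp

lemma dist_eq_0_iff: "x \<in> V \<Longrightarrow> y \<in> V \<Longrightarrow> d x y = 0 \<longleftrightarrow> x = y"
  using walk_dist by fastforce

lemma dist_eq_1_iff: "x \<in> V \<Longrightarrow> y \<in> V \<Longrightarrow> d x y = 1 \<longleftrightarrow> E x y"
proof
  show "d x y = 1" if "E x y"
    using dist_le_walk[of 1 x y] that adj_irrefl walk_dist[of x y] adj_in_V
    by (metis One_nat_def le_neq_implies_less less_one walk_len.simps)
qed (use walk_dist in fastforce)

lemma dist_adj: "E x y \<Longrightarrow> d x y = 1"
  using dist_eq_1_iff adj_in_V by blast

lemma dist_adj_le: "y \<in> V \<Longrightarrow> x \<in> V \<Longrightarrow> E x z \<Longrightarrow> d y z \<le> d y x + 1"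
  using walk_len_snoc[OF walk_dist[of y x]] dist_le_walk by fastforce

lemma dist_adj_ge: "y \<in> V \<Longrightarrow> x \<in> V \<Longrightarrow> E x z \<Longrightarrow> d y x \<le> d y z + 1"
  using dist_adj_le[of y z x] adj_sym adj_in_V by fastforce

lemma card_neighbours:
  assumes "x \<in> V" shows "card {z \<in> V. E x z} = bs 0"
proof -
  have "{z \<in> V. E x z \<and> d x z = 0 + 1} = {z \<in> V. E x z}"
    using dist_adj by auto
  then show ?thesis using intersection_numbers(2)[OF assms assms dist_self] by simp
qed

lemma exists_neighbour_closer:
  assumes "x \<in> V" "y \<in> V" "d y x = Suc m"
  shows "\<exists>z\<in>V. E x z \<and> d y z = m"
proof -
  have "walk_len E (Suc m) x y"
    using walk_dist assms dist_sym by metis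
  then obtain z where z: "E x z" "walk_len E m z y" by auto
  then have "z \<in> V" "d y z \<le> m"
    using adj_in_V dist_le_walk dist_sym assms(2) by fastforce+
  moreover have "d y x \<le> d y z + 1"
    using dist_adj_ge assms z(1) by blast
  ultimately show ?thesis using z(1) assms(3) by auto
qed

lemma exists_pair_at_dist: "i \<le> D \<Longrightarrow> \<exists>x\<in>V. \<exists>y\<in>V. d y x = i"
proof (induction "D - i" arbitrary: i)
  case 0
  then show ?case using diameter_attained dist_sym by (metis diff_is_0_eq le_antisym)
next
  case (Suc n)
  then have "n = D - Suc i" "Suc i \<le> D" by auto
  then obtain x y where "x \<in> V" "y \<in> V" "d y x = Suc i"
    using Suc.hyps(1) by blast
  then show ?case using exists_neighbour_closer by blast
qed

lemma card_pos_if_member: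
  "w \<in> {z \<in> V. P z} \<Longrightarrow> 0 < card {z \<in> V. P z}"
  using finite_V by (auto simp: card_gt_0_iff)

lemma cs_pos: "1 \<le> i \<Longrightarrow> i \<le> D \<Longrightarrow> 0 < cs i"
proof -
  assume i: "1 \<le> i" "i \<le> D"
  then obtain m where m: "i = Suc m" by (cases i) auto
  obtain x y where xy: "x \<in> V" "y \<in> V" "d y x = i"
    using exists_pair_at_dist[OF i(2)] by blast
  obtain z where "z \<in> V" "E x z" "d y z = m"
    using exists_neighbour_closer xy m by blast
  then have "z \<in> {z \<in> V. E x z \<and> d y z + 1 = i}" using m by auto
  then have "0 < card {z \<in> V. E x z \<and> d y z + 1 = i}" by (rule card_pos_if_member)
  then show ?thesis using intersection_numbers(1)[OF xy(2,1,3)] by simp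
qed

lemma bs_pos: "i < D \<Longrightarrow> 0 < bs i"
proof -
  assume "i < D"
  then obtain x y where xy: "x \<in> V" "y \<in> V" "d y x = Suc i"
    using exists_pair_at_dist[of "Suc i"] by auto
  obtain z where z: "z \<in> V" "E x z" "d y z = i"
    using exists_neighbour_closer xy by blast
  then have "x \<in> {w \<in> V. E z w \<and> d y w = i + 1}" using xy adj_sym by auto
  then have "0 < card {w \<in> V. E z w \<and> d y w = i + 1}" by (rule card_pos_if_member)
  then show ?thesis using intersection_numbers(2)[OF xy(2) z(1,3)] by simp
qed

lemma cs_0: "cs 0 = 0"
proof -
  obtain x where "x \<in> V" using V_nonempty by auto
  then show ?thesis using intersection_numbers(1)[of x x 0] by simp
qed

lemma cs_1: "cs 1 = 1"
proof -
  obtain x y where xy: "x \<in> V" "y \<in> V" "d y x = 1"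
    using exists_pair_at_dist[of 1] diameter_pos by auto
  have "{z \<in> V. E x z \<and> d y z + 1 = 1} = {y}"
    using xy dist_eq_0_iff dist_eq_1_iff dist_sym by auto
  then show ?thesis using intersection_numbers(1)[OF xy(2,1,3)] by simp
qed

lemma bs_D: "bs D = 0"
proof -
  obtain x y where xy: "x \<in> V" "y \<in> V" "d y x = D"
    using diameter_attained dist_sym by metis
  have "{z \<in> V. E x z \<and> d y z = D + 1} = {}"
    using dist_le_diameter xy by fastforce
  then show ?thesis using intersection_numbers(2)[OF xy(2,1,3)] by (simp only: card.empty)
qed

lemma valency_pos: "0 < bs 0"
  using bs_pos diameter_pos by simp

end

section \<open>Intersection polynomials and the spectrum\<close>

lemma degree_linear_mult_diff:
  fixes p q :: "'a::idom poly"
  assumes "p \<noteq> 0" and "degree q \<le> degree p"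
  shows "degree ([:a, 1:] * p - q) = Suc (degree p)"
proof -
  have "degree ([:a, 1:] * p) = Suc (degree p)"
    using assms(1) degree_mult_eq[of "[:a, 1:]" p] by simp
  then show ?thesis
    using degree_add_eq_left[of "- q" "[:a, 1:] * p"] assms(2) by simp
qed

context distance_regular_graph
begin

definition a :: "nat \<Rightarrow> real" where
  "a i = real (bs 0) - real (cs i) - real (bs i)"

lemma sum_neighbours_dist:
  assumes x: "x \<in> V" and y: "y \<in> V"
  shows "(\<Sum>z\<in>{z\<in>V. E x z}. g (d y z)) =
     real (cs (d y x)) * g (d y x - 1) + a (d y x) * g (d y x) + real (bs (d y x)) * g (d y x + 1)"
proof -
  define m where "m = d y x"
  define S1 where "S1 = {z \<in> V. E x z \<and> d y z + 1 = m}"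
  define S2 where "S2 = {z \<in> V. E x z \<and> d y z = m}"
  define S3 where "S3 = {z \<in> V. E x z \<and> d y z = m + 1}"
  have N: "{z\<in>V. E x z} = S1 \<union> S2 \<union> S3"
    using dist_adj_le[OF y x] dist_adj_ge[OF y x]
    unfolding S1_def S2_def S3_def m_def by (force simp: le_Suc_eq)
  have fin: "finite S1" "finite S2" "finite S3"
    using finite_V unfolding S1_def S2_def S3_def by auto
  have disj: "S1 \<inter> S2 = {}" "(S1 \<union> S2) \<inter> S3 = {}"
    unfolding S1_def S2_def S3_def by auto
  have c1: "card S1 = cs m" and c3: "card S3 = bs m"
    using intersection_numbers[OF y x] m_def unfolding S1_def S3_def by auto
  have "card {z\<in>V. E x z} = card S1 + card S2 + card S3"
    unfolding N using fin disj by (simp add: card_Un_disjoint)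
  then have c2: "real (card S2) = a m"
    using card_neighbours[OF x] c1 c3 unfolding a_def by simp
  have "(\<Sum>z\<in>S1. g (d y z)) = (\<Sum>z\<in>S1. g (m - 1))"
    by (rule sum.cong) (auto simp: S1_def)
  moreover have "(\<Sum>z\<in>S2. g (d y z)) = (\<Sum>z\<in>S2. g m)"
    by (rule sum.cong) (auto simp: S2_def)
  moreover have "(\<Sum>z\<in>S3. g (d y z)) = (\<Sum>z\<in>S3. g (m + 1))"
    by (rule sum.cong) (auto simp: S3_def)
  moreover have "(\<Sum>z\<in>{z\<in>V. E x z}. g (d y z)) =
      (\<Sum>z\<in>S1. g (d y z)) + (\<Sum>z\<in>S2. g (d y z)) + (\<Sum>z\<in>S3. g (d y z))"
    unfolding N using fin disj by (simp add: sum.union_disjoint)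
  ultimately show ?thesis using c1 c2 c3 m_def by simp
qed

text \<open>\<open>sphere_sum i\<close> is the distance-\<open>i\<close> matrix \<open>A\<^sub>i\<close> of the graph.\<close>

definition sphere_sum :: "nat \<Rightarrow> ('a \<Rightarrow> real) \<Rightarrow> 'a \<Rightarrow> real" where
  "sphere_sum i f x = (\<Sum>y\<in>{y\<in>V. d x y = i}. f y)"

lemma sphere_sum_eq_sum_V: "sphere_sum i f x = (\<Sum>y\<in>V. of_bool (d x y = i) * f y)"
  unfolding sphere_sum_def sum.inter_filter[OF finite_V] by (intro sum.cong) auto

lemma count_neighbours_at_dist:
  assumes x: "x \<in> V" and y: "y \<in> V" and j: "1 \<le> j"
  shows "(\<Sum>z\<in>{z\<in>V. E x z}. of_bool (d z y = j)) =
    real (bs (j - 1)) * of_bool (d x y = j - 1) + a j * of_bool (d x y = j)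
      + real (cs (j + 1)) * of_bool (d x y = j + 1)"
proof -
  have "(\<Sum>z\<in>{z\<in>V. E x z}. of_bool (d z y = j)) =
      (\<Sum>z\<in>{z\<in>V. E x z}. (\<lambda>t. of_bool (t = j)) (d y z))"
    using dist_sym y by (intro sum.cong) auto
  also have "\<dots> = real (cs (d y x)) * of_bool (d y x - 1 = j) + a (d y x) * of_bool (d y x = j)
      + real (bs (d y x)) * of_bool (d y x + 1 = j)"
    by (rule sum_neighbours_dist[OF x y])
  finally show ?thesis
    using j dist_sym[OF x y] by (cases "d x y + 1 = j \<or> d x y = j + 1") auto
qed

lemma sphere_sum_neighbours:
  assumes x: "x \<in> V" and j: "1 \<le> j"
  shows "(\<Sum>z\<in>{z\<in>V. E x z}. sphere_sum j f z) = real (bs (j - 1)) * sphere_sum (j - 1) f x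
     + a j * sphere_sum j f x + real (cs (j + 1)) * sphere_sum (j + 1) f x"
proof -
  have "(\<Sum>z\<in>{z\<in>V. E x z}. sphere_sum j f z) =
      (\<Sum>y\<in>V. (\<Sum>z\<in>{z\<in>V. E x z}. of_bool (d z y = j)) * f y)"
    unfolding sphere_sum_eq_sum_V by (subst sum.swap) (simp add: sum_distrib_right)
  also have "\<dots> = (\<Sum>y\<in>V. (real (bs (j - 1)) * of_bool (d x y = j - 1) + a j * of_bool (d x y = j)
      + real (cs (j + 1)) * of_bool (d x y = j + 1)) * f y)"
    using count_neighbours_at_dist[OF x _ j] by simp
  finally show ?thesis
    by (simp add: sphere_sum_eq_sum_V algebra_simps sum.distrib sum_distrib_left)
qed

text \<open>The intersection polynomials: \<open>A\<^sub>i = v\<^sub>i(A)\<close>.\<close>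

fun v :: "nat \<Rightarrow> real poly" where
  "v 0 = 1"
| "v (Suc 0) = [:0, 1:]"
| "v (Suc (Suc i)) = smult (1 / real (cs (Suc (Suc i))))
     ([:- a (Suc i), 1:] * v (Suc i) - smult (real (bs i)) (v i))"

lemma poly_v_Suc_Suc:
  "poly (v (Suc (Suc i))) \<theta> =
     ((\<theta> - a (Suc i)) * poly (v (Suc i)) \<theta> - real (bs i) * poly (v i) \<theta>) / real (cs (Suc (Suc i)))"
  by (simp add: algebra_simps divide_inverse)

declare v.simps(3) [simp del]

lemma degree_v: "i \<le> D \<Longrightarrow> degree (v i) = i"
proof (induction i rule: v.induct)
  case (3 i)
  then have IH: "degree (v (Suc i)) = Suc i" "degree (v i) = i" by auto
  then have "v (Suc i) \<noteq> 0" by auto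
  moreover have "degree (smult (real (bs i)) (v i)) \<le> degree (v (Suc i))"
    using degree_smult_le[of "real (bs i)" "v i"] IH by simp
  ultimately have "degree ([:- a (Suc i), 1:] * v (Suc i) - smult (real (bs i)) (v i)) =
      Suc (degree (v (Suc i)))"
    by (rule degree_linear_mult_diff)
  moreover have "real (cs (Suc (Suc i))) \<noteq> 0" using cs_pos "3.prems" by simp
  ultimately show ?case using IH(1) by (simp add: v.simps(3))
qed simp_all

text \<open>The recurrence continued one step beyond \<open>D\<close>, where \<open>A\<^sub>D\<^sub>+\<^sub>1 = 0\<close>.\<close>

definition eigen_poly :: "real poly" where
  "eigen_poly = [:- a D, 1:] * v D - smult (real (bs (D - 1))) (v (D - 1))"

lemma poly_eigen_poly:
  "poly eigen_poly \<theta> = (\<theta> - a D) * poly (v D) \<theta> - real (bs (D - 1)) * poly (v (D - 1)) \<theta>"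
  unfolding eigen_poly_def by (simp add: algebra_simps)

lemma eigen_poly_nonzero: "eigen_poly \<noteq> 0"
proof -
  have "v D \<noteq> 0" using degree_v[of D] diameter_pos by auto
  moreover have "degree (smult (real (bs (D - 1))) (v (D - 1))) \<le> degree (v D)"
    using degree_smult_le[of _ "v (D - 1)"] degree_v by (simp add: le_trans)
  ultimately have "degree eigen_poly = Suc (degree (v D))"
    unfolding eigen_poly_def by (rule degree_linear_mult_diff)
  then show ?thesis by auto
qed

definition eigenfunction :: "real \<Rightarrow> ('a \<Rightarrow> real) \<Rightarrow> bool" where
  "eigenfunction \<theta> f \<longleftrightarrow> (\<forall>x\<in>V. (\<Sum>y\<in>{y\<in>V. E x y}. f y) = \<theta> * f x)"

lemma sphere_sum_eigenfunction:
  assumes f: "eigenfunction \<theta> f"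
  shows "i \<le> D \<Longrightarrow> x \<in> V \<Longrightarrow> sphere_sum i f x = poly (v i) \<theta> * f x"
proof (induction i arbitrary: x rule: v.induct)
  case 1
  then have "{y\<in>V. d x y = 0} = {x}" using dist_eq_0_iff by auto
  then show ?case by (simp add: sphere_sum_def)
next
  case 2
  then have "{y\<in>V. d x y = 1} = {y\<in>V. E x y}" using dist_eq_1_iff by auto
  then show ?case using f 2 by (simp add: sphere_sum_def eigenfunction_def)
next
  case (3 i)
  have IH: "\<And>z. z \<in> V \<Longrightarrow> sphere_sum (Suc i) f z = poly (v (Suc i)) \<theta> * f z"
    "sphere_sum i f x = poly (v i) \<theta> * f x"
    using 3 by auto
  have "(\<Sum>z\<in>{z\<in>V. E x z}. sphere_sum (Suc i) f z) = (\<Sum>z\<in>{z\<in>V. E x z}. poly (v (Suc i)) \<theta> * f z)"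
    using IH(1) by (intro sum.cong) auto
  also have "\<dots> = poly (v (Suc i)) \<theta> * (\<theta> * f x)"
    using f "3.prems"(2) by (simp add: eigenfunction_def sum_distrib_left[symmetric])
  finally have "real (cs (Suc (Suc i))) * sphere_sum (Suc (Suc i)) f x =
      (\<theta> - a (Suc i)) * poly (v (Suc i)) \<theta> * f x - real (bs i) * poly (v i) \<theta> * f x"
    using sphere_sum_neighbours[OF "3.prems"(2), of "Suc i" f] IH "3.prems"(2)
    by (simp add: algebra_simps)
  moreover have "real (cs (Suc (Suc i))) \<noteq> 0" using cs_pos "3.prems"(1) by simp
  ultimately show ?case
    by (simp add: poly_v_Suc_Suc field_simps)
qed

lemma eigenfunction_root:
  assumes f: "eigenfunction \<theta> f" and x: "x \<in> V" and fx: "f x \<noteq> 0"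
  shows "poly eigen_poly \<theta> = 0"
proof -
  have empty: "{y\<in>V. d x y = D + 1} = {}" using dist_le_diameter x by fastforce
  have "sphere_sum (D + 1) f x = 0" unfolding sphere_sum_def empty by simp
  then have "(\<Sum>z\<in>{z\<in>V. E x z}. sphere_sum D f z) =
      real (bs (D - 1)) * sphere_sum (D - 1) f x + a D * sphere_sum D f x"
    using sphere_sum_neighbours[OF x, of D f] diameter_pos by simp
  moreover have "(\<Sum>z\<in>{z\<in>V. E x z}. sphere_sum D f z) = poly (v D) \<theta> * (\<theta> * f x)"
    using f x sphere_sum_eigenfunction[OF f] adj_in_V
    by (simp add: eigenfunction_def sum_distrib_left[symmetric])
  ultimately have "poly eigen_poly \<theta> * f x = 0"
    using sphere_sum_eigenfunction[OF f _ x, of D] sphere_sum_eigenfunction[OF f _ x, of "D - 1"]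
    by (simp add: poly_eigen_poly algebra_simps)
  then show ?thesis using fx by simp
qed

text \<open>\<open>ki i\<close> is the size \<open>k\<^sub>i\<close> of a sphere of radius \<open>i\<close>, and \<open>cosine \<theta>\<close> is the cosine
  sequence \<open>u\<^sub>i = v\<^sub>i(\<theta>)/k\<^sub>i\<close> of \<open>\<theta>\<close>.\<close>

fun ki :: "nat \<Rightarrow> real" where
  "ki 0 = 1"
| "ki (Suc i) = ki i * real (bs i) / real (cs (Suc i))"

definition cosine :: "real \<Rightarrow> nat \<Rightarrow> real" where
  "cosine \<theta> i = poly (v i) \<theta> / ki i"

lemma ki_pos: "i \<le> D \<Longrightarrow> 0 < ki i"
  by (induction i) (auto simp: bs_pos cs_pos)

lemma cosine_0 [simp]: "cosine \<theta> 0 = 1"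
  by (simp add: cosine_def)

lemma cosine_1: "cosine \<theta> 1 = \<theta> / real (bs 0)"
  using cs_1 by (simp add: cosine_def)

lemma cosine_recurrence:
  assumes root: "poly eigen_poly \<theta> = 0" and m: "m \<le> D"
  shows "real (cs m) * cosine \<theta> (m - 1) + a m * cosine \<theta> m + real (bs m) * cosine \<theta> (m + 1)
    = \<theta> * cosine \<theta> m"
proof (cases m)
  case 0
  then show ?thesis using cs_0 cs_1 valency_pos by (simp add: cosine_def a_def)
next
  case (Suc n)
  have pos: "0 < ki n" "0 < real (bs n)" "0 < real (cs (Suc n))"
    using ki_pos bs_pos cs_pos m Suc by auto
  show ?thesis
  proof (cases "Suc n = D")
    case True
    moreover have "D - 1 = n" using True by simp
    ultimately have root': "\<theta> * poly (v (Suc n)) \<theta> = real (bs n) * poly (v n) \<theta> + a (Suc n) * poly (v (Suc n)) \<theta>"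
      using root by (simp add: poly_eigen_poly algebra_simps)
    have "real (cs (Suc n)) * cosine \<theta> n + a (Suc n) * cosine \<theta> (Suc n)
        = (real (bs n) * poly (v n) \<theta> + a (Suc n) * poly (v (Suc n)) \<theta>) / ki (Suc n)"
      using pos by (simp add: cosine_def field_simps)
    also have "\<dots> = \<theta> * cosine \<theta> (Suc n)"
      using root' by (simp add: cosine_def)
    moreover have "bs (Suc n) = 0" using bs_D True by simp
    ultimately show ?thesis
      unfolding Suc by simp
  next
    case False
    then have "0 < real (bs (Suc n))" "0 < real (cs (Suc (Suc n)))"
      using bs_pos cs_pos m Suc by auto
    then show ?thesis
      using pos Suc by (simp add: cosine_def poly_v_Suc_Suc field_simps)
  qed
qed

lemma eigenfunction_cosine:
  assumes "poly eigen_poly \<theta> = 0" and "y \<in> V"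
  shows "eigenfunction \<theta> (\<lambda>z. cosine \<theta> (d y z))"
  unfolding eigenfunction_def
  using sum_neighbours_dist[OF _ \<open>y \<in> V\<close>] cosine_recurrence[OF assms(1) dist_le_diameter[OF \<open>y \<in> V\<close>]]
  by simp

lemma mem_adj_eigenvalues_iff:
  "\<theta> \<in> adj_eigenvalues V E \<longleftrightarrow> (\<exists>f. (\<exists>x\<in>V. f x \<noteq> 0) \<and> eigenfunction \<theta> f)"
  by (simp add: adj_eigenvalues_def eigenfunction_def)

theorem adj_eigenvalues_eq_roots: "adj_eigenvalues V E = {\<theta>. poly eigen_poly \<theta> = 0}"
proof (intro set_eqI iffI)
  fix \<theta> assume "\<theta> \<in> adj_eigenvalues V E"
  then show "\<theta> \<in> {\<theta>. poly eigen_poly \<theta> = 0}"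
    unfolding mem_adj_eigenvalues_iff using eigenfunction_root by blast
next
  fix \<theta> assume "\<theta> \<in> {\<theta>. poly eigen_poly \<theta> = 0}"
  moreover obtain y where "y \<in> V" using V_nonempty by auto
  ultimately have "eigenfunction \<theta> (\<lambda>z. cosine \<theta> (d y z))"
    using eigenfunction_cosine by simp
  moreover have "\<exists>x\<in>V. cosine \<theta> (d y x) \<noteq> 0"
    using \<open>y \<in> V\<close> by force
  ultimately show "\<theta> \<in> adj_eigenvalues V E"
    unfolding mem_adj_eigenvalues_iff by (intro exI conjI)
qed

lemma finite_adj_eigenvalues: "finite (adj_eigenvalues V E)"
  unfolding adj_eigenvalues_eq_roots using poly_roots_finite[OF eigen_poly_nonzero] .

section \<open>Delsarte's clique bound\<close>

definition cosine_norm :: "real \<Rightarrow> real" where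
  "cosine_norm \<theta> = (\<Sum>i\<le>D. cosine \<theta> i * poly (v i) \<theta>)"

lemma sum_cosine_products:
  assumes root: "poly eigen_poly \<theta> = 0" and x: "x \<in> V" and y: "y \<in> V"
  shows "(\<Sum>z\<in>V. cosine \<theta> (d x z) * cosine \<theta> (d y z)) = cosine_norm \<theta> * cosine \<theta> (d y x)"
proof -
  have "d x ` V \<subseteq> {..D}" using dist_le_diameter x by auto
  then have "(\<Sum>z\<in>V. cosine \<theta> (d x z) * cosine \<theta> (d y z)) =
      (\<Sum>i\<le>D. \<Sum>z\<in>{z\<in>V. d x z = i}. cosine \<theta> (d x z) * cosine \<theta> (d y z))"
    by (rule sum.group[OF finite_V finite_atMost, symmetric])
  also have "\<dots> = (\<Sum>i\<le>D. cosine \<theta> i * sphere_sum i (\<lambda>z. cosine \<theta> (d y z)) x)"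
    unfolding sphere_sum_def sum_distrib_left by (intro sum.cong) auto
  also have "\<dots> = (\<Sum>i\<le>D. cosine \<theta> i * (poly (v i) \<theta> * cosine \<theta> (d y x)))"
    using sphere_sum_eigenfunction[OF eigenfunction_cosine[OF root y] _ x] by simp
  also have "\<dots> = cosine_norm \<theta> * cosine \<theta> (d y x)"
    unfolding cosine_norm_def by (simp add: sum_distrib_right mult.assoc)
  finally show ?thesis .
qed

lemma cosine_norm_ge_1:
  assumes root: "poly eigen_poly \<theta> = 0"
  shows "1 \<le> cosine_norm \<theta>"
proof -
  obtain x where x: "x \<in> V" using V_nonempty by auto
  have "1 = cosine \<theta> (d x x) * cosine \<theta> (d x x)" by simp
  also have "\<dots> \<le> (\<Sum>z\<in>V. cosine \<theta> (d x z) * cosine \<theta> (d x z))"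
    by (rule member_le_sum[OF x _ finite_V]) simp
  also have "\<dots> = cosine_norm \<theta>"
    using sum_cosine_products[OF root x x] by simp
  finally show ?thesis .
qed

lemma sum_cosine_clique:
  assumes C: "is_clique V E C" and x: "x \<in> C"
  shows "(\<Sum>y\<in>C. cosine \<theta> (d y x)) = 1 + (real (card C) - 1) * (\<theta> / real (bs 0))"
proof -
  have finC: "finite C" using C finite_V finite_subset unfolding is_clique_def by auto
  have "(\<Sum>y\<in>C - {x}. cosine \<theta> (d y x)) = (\<Sum>y\<in>C - {x}. \<theta> / real (bs 0))"
    using C x dist_adj cosine_1 unfolding is_clique_def by (intro sum.cong) auto
  moreover have "0 < card C" using finC x card_gt_0_iff by blast
  then have "real (card (C - {x})) = real (card C) - 1"
    using x by (simp add: of_nat_diff Suc_le_eq)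
  ultimately show ?thesis
    using sum.remove[OF finC x, of "\<lambda>y. cosine \<theta> (d y x)"] by simp
qed

theorem delsarte_clique_bound:
  assumes root: "poly eigen_poly \<theta> = 0" and neg: "\<theta> < 0" and C: "is_clique V E C"
  shows "real (card C) \<le> 1 + real (bs 0) / - \<theta>"
proof (cases "C = {}")
  case False
  have CV: "C \<subseteq> V" using C unfolding is_clique_def by auto
  then have finC: "finite C" using finite_V finite_subset by auto
  define s where "s = 1 + (real (card C) - 1) * (\<theta> / real (bs 0))"
  have "0 \<le> (\<Sum>z\<in>V. (\<Sum>x\<in>C. cosine \<theta> (d x z)) * (\<Sum>x\<in>C. cosine \<theta> (d x z)))"
    by (simp add: sum_nonneg)
  also have "\<dots> = (\<Sum>x\<in>C. \<Sum>y\<in>C. \<Sum>z\<in>V. cosine \<theta> (d x z) * cosine \<theta> (d y z))"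
    by (simp add: sum_product sum.swap[of _ V] sum.swap[of _ V C])
  also have "\<dots> = (\<Sum>x\<in>C. cosine_norm \<theta> * (\<Sum>y\<in>C. cosine \<theta> (d y x)))"
    using sum_cosine_products[OF root] CV by (auto simp: sum_distrib_left intro!: sum.cong)
  also have "\<dots> = real (card C) * cosine_norm \<theta> * s"
    using sum_cosine_clique[OF C] by (simp add: s_def)
  finally have "0 \<le> real (card C) * cosine_norm \<theta> * s" .
  moreover have "0 < real (card C) * cosine_norm \<theta>"
    using cosine_norm_ge_1[OF root] False finC by (simp add: card_gt_0_iff)
  ultimately have "0 \<le> s" by (simp add: zero_le_mult_iff)
  then show ?thesis
    using valency_pos neg unfolding s_def by (simp add: field_simps)
qed (use valency_pos neg in simp)

section \<open>The smallest eigenvalue\<close>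

definition signed_v :: "real \<Rightarrow> nat \<Rightarrow> real" where
  "signed_v \<theta> i = (-1) ^ i * poly (v i) \<theta>"

lemma signed_v_Suc_Suc:
  "signed_v \<theta> (Suc (Suc i)) =
     ((a (Suc i) - \<theta>) * signed_v \<theta> (Suc i) - real (bs i) * signed_v \<theta> i) / real (cs (Suc (Suc i)))"
  unfolding signed_v_def poly_v_Suc_Suc by (simp add: field_simps)

lemma signed_eigen_poly:
  "(-1) ^ D * poly eigen_poly \<theta> =
     (\<theta> - a D) * signed_v \<theta> D + real (bs (D - 1)) * signed_v \<theta> (D - 1)"
proof -
  have "(- 1 :: real) ^ D = - ((- 1) ^ (D - 1))"
    using diameter_pos by (cases D) auto
  then show ?thesis by (simp add: poly_eigen_poly signed_v_def algebra_simps)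
qed

lemma signed_v_comparison:
  assumes "x < \<theta>" and pos: "\<forall>i\<le>D. 0 < signed_v \<theta> i"
  shows "Suc n \<le> D \<Longrightarrow> 0 < signed_v x n \<and> 0 < signed_v x (Suc n) \<and>
    signed_v \<theta> (Suc n) * signed_v x n < signed_v x (Suc n) * signed_v \<theta> n"
proof (induction n)
  case 0
  then show ?case using pos[rule_format, of 1] \<open>x < \<theta>\<close> by (simp add: signed_v_def)
next
  case (Suc n)
  let ?c = "real (cs (Suc (Suc n)))"
  have IH: "0 < signed_v x (Suc n)"
    "signed_v \<theta> (Suc n) * signed_v x n < signed_v x (Suc n) * signed_v \<theta> n"
    using Suc by auto
  have c: "0 < ?c" using cs_pos Suc.prems by simp
  have "?c * (signed_v x (Suc (Suc n)) * signed_v \<theta> (Suc n)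
      - signed_v \<theta> (Suc (Suc n)) * signed_v x (Suc n))
    = (\<theta> - x) * signed_v x (Suc n) * signed_v \<theta> (Suc n)
      + real (bs n) * (signed_v x (Suc n) * signed_v \<theta> n - signed_v \<theta> (Suc n) * signed_v x n)"
    using c by (simp add: signed_v_Suc_Suc field_simps)
  also have "\<dots> > 0"
    using IH pos Suc.prems \<open>x < \<theta>\<close> by (intro add_pos_nonneg mult_pos_pos) auto
  finally have step: "signed_v \<theta> (Suc (Suc n)) * signed_v x (Suc n) <
      signed_v x (Suc (Suc n)) * signed_v \<theta> (Suc n)"
    using c by (simp add: zero_less_mult_iff)
  have pos2: "0 < signed_v \<theta> (Suc (Suc n))" "0 < signed_v \<theta> (Suc n)"
    using pos Suc.prems by auto
  then have "0 < signed_v x (Suc (Suc n)) * signed_v \<theta> (Suc n)"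
    using step IH(1) mult_pos_pos[of "signed_v \<theta> (Suc (Suc n))" "signed_v x (Suc n)"] by linarith
  then have "0 < signed_v x (Suc (Suc n))"
    using pos2(2) by (simp add: zero_less_mult_iff)
  then show ?case using IH step by auto
qed

lemma no_root_below:
  assumes root: "poly eigen_poly \<theta> = 0" and pos: "\<forall>i\<le>D. 0 < signed_v \<theta> i" and "x < \<theta>"
  shows "poly eigen_poly x \<noteq> 0"
proof -
  define n where "n = D - 1"
  have D: "Suc n = D" using diameter_pos n_def by simp
  have cmp: "0 < signed_v x n" "0 < signed_v x D"
      "signed_v \<theta> D * signed_v x n < signed_v x D * signed_v \<theta> n"
    using signed_v_comparison[OF \<open>x < \<theta>\<close> pos, of n] D by auto
  have root': "(\<theta> - a D) * signed_v \<theta> D = - real (bs n) * signed_v \<theta> n"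
    using signed_eigen_poly[of \<theta>] root n_def by simp
  have "signed_v \<theta> D * ((-1) ^ D * poly eigen_poly x)
      = (x - \<theta>) * signed_v x D * signed_v \<theta> D + ((\<theta> - a D) * signed_v \<theta> D) * signed_v x D
        + real (bs n) * signed_v x n * signed_v \<theta> D"
    unfolding signed_eigen_poly n_def by (simp add: algebra_simps)
  also have "\<dots> = (x - \<theta>) * signed_v x D * signed_v \<theta> D
        - real (bs n) * (signed_v x D * signed_v \<theta> n - signed_v \<theta> D * signed_v x n)"
    unfolding root' by (simp add: algebra_simps)
  also have "\<dots> < 0"
  proof -
    have "0 < signed_v \<theta> D" using pos by simp
    then have "(x - \<theta>) * signed_v x D * signed_v \<theta> D < 0"
      using cmp \<open>x < \<theta>\<close> by (simp add: mult_neg_pos)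
    moreover have "0 \<le> real (bs n) * (signed_v x D * signed_v \<theta> n - signed_v \<theta> D * signed_v x n)"
      using cmp by simp
    ultimately show ?thesis by linarith
  qed
  finally show ?thesis by auto
qed

theorem theta_min_eq_root:
  assumes root: "poly eigen_poly \<theta> = 0" and pos: "\<forall>i\<le>D. 0 < signed_v \<theta> i"
  shows "theta_min V E = \<theta>"
  unfolding theta_min_def
proof (rule Min_eqI[OF finite_adj_eigenvalues])
  show "\<theta> \<in> adj_eigenvalues V E" using root adj_eigenvalues_eq_roots by simp
  show "\<theta> \<le> x" if "x \<in> adj_eigenvalues V E" for x
    using that no_root_below[OF root pos, of x] adj_eigenvalues_eq_roots by force
qed

end

section \<open>Classical parameters\<close>

lemma qbr_0 [simp]: "qbr b 0 = 0"
  unfolding qbr_def by simp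

lemma qbr_Suc: "b \<noteq> 1 \<Longrightarrow> qbr b (Suc i) = qbr b i + real_of_int b ^ i"
  unfolding qbr_def by (simp add: field_simps)

lemma strict_mono_qbr: "1 < b \<Longrightarrow> strict_mono (qbr b)"
  by (rule strict_mono_Suc_iff[THEN iffD2]) (simp add: qbr_Suc)

lemma qbr_pos: "1 < b \<Longrightarrow> 0 < i \<Longrightarrow> 0 < qbr b i"
  using strict_mono_qbr[of b] unfolding strict_mono_def by (metis qbr_0)

locale classical_drg = distance_regular_graph +
  fixes b :: int and \<alpha> \<beta> :: real
  assumes classical: "classical_parameters D b \<alpha> \<beta> bs cs"
    and b_gt_1: "1 < b"
begin

abbreviation r :: real where "r \<equiv> qbr b D"

lemma bs_classical: "i \<le> D \<Longrightarrow> real (bs i) = (r - qbr b i) * (\<beta> - \<alpha> * qbr b i)"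
  using classical unfolding classical_parameters_def by auto

lemma cs_classical: "1 \<le> i \<Longrightarrow> i \<le> D \<Longrightarrow> real (cs i) = qbr b i * (1 + \<alpha> * qbr b (i - 1))"
  using classical unfolding classical_parameters_def by auto

lemma valency_classical: "real (bs 0) = r * \<beta>"
  using bs_classical[of 0] by simp

lemma r_pos: "0 < r"
  using qbr_pos b_gt_1 diameter_pos by simp

lemma beta_pos: "0 < \<beta>"
proof -
  have "0 < r * \<beta>" using valency_pos valency_classical by simp
  then show ?thesis using r_pos zero_less_mult_pos by blast
qed

lemma qbr_less_r: "i < D \<Longrightarrow> qbr b i < r"
  using strict_mono_qbr b_gt_1 unfolding strict_mono_def by blast

definition signed_v_at_r :: "nat \<Rightarrow> real" where
  "signed_v_at_r i = (\<Prod>j<i. (r - qbr b j) / qbr b (Suc j))"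

lemma signed_v_at_r_pos: "i \<le> D \<Longrightarrow> 0 < signed_v_at_r i"
  unfolding signed_v_at_r_def using qbr_less_r qbr_pos b_gt_1 by (intro prod_pos) auto

lemma a_classical:
  assumes "1 \<le> i" "i \<le> D"
  shows "a i = r * \<beta> - qbr b i * (1 + \<alpha> * qbr b (i - 1)) - (r - qbr b i) * (\<beta> - \<alpha> * qbr b i)"
  unfolding a_def using valency_classical cs_classical bs_classical assms by simp

lemma signed_v_minus_r: "i \<le> D \<Longrightarrow> signed_v (- r) i = signed_v_at_r i"
proof (induction i rule: v.induct)
  case 1
  then show ?case by (simp add: signed_v_def signed_v_at_r_def)
next
  case 2
  then show ?case using b_gt_1 by (simp add: signed_v_def signed_v_at_r_def qbr_Suc)
next
  case (3 i)
  define q0 q1 q2 where "q0 = qbr b i" and "q1 = qbr b (Suc i)" and "q2 = qbr b (Suc (Suc i))"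
  have pos: "0 < q1" "0 < q2" using qbr_pos b_gt_1 unfolding q1_def q2_def by auto
  have c2: "real (cs (Suc (Suc i))) = q2 * (1 + \<alpha> * q1)" and c2_pos: "0 < real (cs (Suc (Suc i)))"
    using cs_classical[of "Suc (Suc i)"] cs_pos[of "Suc (Suc i)"] "3.prems" q1_def q2_def by auto
  have b0: "real (bs i) = (r - q0) * (\<beta> - \<alpha> * q0)"
    using bs_classical[of i] "3.prems" q0_def by simp
  have a1: "r + a (Suc i) - q1 * (\<beta> - \<alpha> * q0) = (1 + \<alpha> * q1) * (r - q1)"
    using a_classical[of "Suc i"] valency_classical "3.prems" q0_def q1_def by (simp add: algebra_simps)
  have s1: "signed_v_at_r (Suc i) = signed_v_at_r i * ((r - q0) / q1)"
    and s2: "signed_v_at_r (Suc (Suc i)) = signed_v_at_r i * ((r - q0) / q1) * ((r - q1) / q2)"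
    unfolding signed_v_at_r_def q0_def q1_def q2_def by simp_all
  have "(a (Suc i) + r) * signed_v_at_r (Suc i) - real (bs i) * signed_v_at_r i
      = signed_v_at_r i * (r - q0) / q1 * (r + a (Suc i) - q1 * (\<beta> - \<alpha> * q0))"
    unfolding s1 b0 using pos by (simp add: field_simps)
  also have "\<dots> = real (cs (Suc (Suc i))) * signed_v_at_r (Suc (Suc i))"
    unfolding a1 s2 c2 using pos by (simp add: field_simps)
  finally show ?case
    using "3.IH" "3.prems" c2_pos by (simp add: signed_v_Suc_Suc)
qed

lemma eigen_poly_root_minus_r: "poly eigen_poly (- r) = 0"
proof -
  obtain n where D: "Suc n = D" using diameter_pos by (metis Suc_pred)
  then have n: "D - 1 = n" by simp
  define q where "q = qbr b n"
  define s where "s = signed_v_at_r n"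
  have aD: "- r - a D = r * (\<alpha> * q - \<beta>)"
    using a_classical[of D] diameter_pos n q_def by (simp add: algebra_simps)
  have bn: "real (bs (D - 1)) = (r - q) * (\<beta> - \<alpha> * q)"
    using bs_classical[of n] D q_def by auto
  have "signed_v_at_r (Suc n) = s * ((r - q) / qbr b (Suc n))"
    unfolding signed_v_at_r_def q_def s_def by simp
  then have vD: "signed_v (- r) D = s * ((r - q) / r)"
    using signed_v_minus_r[of D] D by simp
  have vn: "signed_v (- r) (D - 1) = s"
    using signed_v_minus_r[of n] D s_def by auto
  have "(- r - a D) * signed_v (- r) D + real (bs (D - 1)) * signed_v (- r) (D - 1)
      = r * (\<alpha> * q - \<beta>) * (s * ((r - q) / r)) + (r - q) * (\<beta> - \<alpha> * q) * s"
    unfolding aD bn vD vn ..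
  also have "\<dots> = (\<alpha> * q - \<beta>) * (r - q) * s + (r - q) * (\<beta> - \<alpha> * q) * s"
    using r_pos by simp
  also have "\<dots> = 0" by (simp add: algebra_simps)
  finally show ?thesis using signed_eigen_poly[of "- r"] by simp
qed

theorem theta_min_classical: "theta_min V E = - r"
  using theta_min_eq_root[OF eigen_poly_root_minus_r] signed_v_minus_r signed_v_at_r_pos by simp

theorem clique_card_le: "is_clique V E C \<Longrightarrow> real (card C) \<le> 1 + \<beta>"
  using delsarte_clique_bound[OF eigen_poly_root_minus_r] r_pos valency_classical by simp

lemma delsarte_clique_iff: "delsarte_clique V E (bs 0) C \<longleftrightarrow> is_clique V E C \<and> real (card C) = 1 + \<beta>"
  unfolding delsarte_clique_def theta_min_classical valency_classical using r_pos by simp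

end

section \<open>Lines through a vertex\<close>

lemma card_ge_of_bounded_sum:
  fixes f :: "'b \<Rightarrow> real"
  assumes fin: "finite A" and le: "\<And>x. x \<in> A \<Longrightarrow> f x \<le> c" and c: "0 < c"
    and sum: "sum f A = r * c"
  shows "r \<le> real (card A)" and "real (card A) = r \<longleftrightarrow> (\<forall>x\<in>A. f x = c)"
proof -
  have slack: "(\<Sum>x\<in>A. c - f x) = (real (card A) - r) * c"
    using sum by (simp add: sum_subtractf algebra_simps)
  moreover have nonneg: "0 \<le> (\<Sum>x\<in>A. c - f x)"
    using le by (simp add: sum_nonneg)
  ultimately show "r \<le> real (card A)"
    using c by (simp add: zero_le_mult_iff)
  have "real (card A) = r \<longleftrightarrow> (\<Sum>x\<in>A. c - f x) = 0"
    unfolding slack using c by simp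
  also have "\<dots> \<longleftrightarrow> (\<forall>x\<in>A. c - f x = 0)"
    using fin le by (intro sum_nonneg_eq_0_iff) auto
  finally show "real (card A) = r \<longleftrightarrow> (\<forall>x\<in>A. f x = c)" by auto
qed

lemma finite_glines: "finite V \<Longrightarrow> finite (glines V E \<gamma>)"
  unfolding glines_def maximal_clique_def is_clique_def
  by (rule finite_subset[of _ "Pow V"]) auto

lemma glines_is_clique: "L \<in> glines V E \<gamma> \<Longrightarrow> is_clique V E L"
  unfolding glines_def maximal_clique_def by simp

lemma card_neighbours_eq_sum_lines:
  assumes G: "simple_graph V E" and pls: "PLS V E \<gamma>" and x: "x \<in> V"
  shows "real (card {z \<in> V. E x z}) = (\<Sum>L\<in>{L \<in> glines V E \<gamma>. x \<in> L}. real (card L) - 1)"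
proof -
  define Lx where "Lx = {L \<in> glines V E \<gamma>. x \<in> L}"
  have finV: "finite V" using G unfolding simple_graph_def by simp
  have finLx: "finite Lx" unfolding Lx_def using finite_glines[OF finV] by simp
  have LV: "L \<subseteq> V" and xL: "x \<in> L" if "L \<in> Lx" for L
    using that glines_is_clique unfolding Lx_def is_clique_def by blast+
  have finL: "finite L" if "L \<in> Lx" for L
    using LV[OF that] finV finite_subset by blast
  have nbrs: "{z \<in> V. E x z} = (\<Union>L\<in>Lx. L - {x})"
  proof (intro set_eqI iffI)
    fix z assume "z \<in> {z \<in> V. E x z}"
    then show "z \<in> (\<Union>L\<in>Lx. L - {x})"
      using pls x unfolding PLS_def Lx_def by auto
  next
    fix z assume "z \<in> (\<Union>L\<in>Lx. L - {x})"
    then obtain L where L: "L \<in> Lx" "z \<in> L" "z \<noteq> x" by blast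
    then have "is_clique V E L" "x \<in> L"
      using glines_is_clique xL unfolding Lx_def by blast+
    then show "z \<in> {z \<in> V. E x z}"
      using L(2,3) unfolding is_clique_def by auto
  qed
  have disj: "(L1 - {x}) \<inter> (L2 - {x}) = {}" if "L1 \<in> Lx" "L2 \<in> Lx" "L1 \<noteq> L2" for L1 L2
  proof (rule ccontr)
    assume "(L1 - {x}) \<inter> (L2 - {x}) \<noteq> {}"
    then obtain z where z: "z \<in> L1" "z \<in> L2" "z \<noteq> x" by auto
    have "{L1, L2} \<subseteq> {L \<in> glines V E \<gamma>. x \<in> L \<and> z \<in> L}"
      using that z unfolding Lx_def by auto
    then have "card {L1, L2} \<le> card {L \<in> glines V E \<gamma>. x \<in> L \<and> z \<in> L}"
      using finite_glines[OF finV] by (intro card_mono) auto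
    also have "\<dots> \<le> 1"
      using pls x z LV[OF that(1)] unfolding PLS_def by auto
    finally show False using that(3) by simp
  qed
  have card_L: "real (card (L - {x})) = real (card L) - 1" if "L \<in> Lx" for L
  proof -
    have "card L \<noteq> 0" using finL[OF that] xL[OF that] by auto
    then show ?thesis using xL[OF that] by (simp add: of_nat_diff)
  qed
  have "card {z \<in> V. E x z} = (\<Sum>L\<in>Lx. card (L - {x}))"
    unfolding nbrs using finLx finL disj by (intro card_UN_disjoint) auto
  then have "real (card {z \<in> V. E x z}) = (\<Sum>L\<in>Lx. real (card (L - {x})))"
    by simp
  also have "\<dots> = (\<Sum>L\<in>Lx. real (card L) - 1)"
    using card_L by (rule sum.cong[OF refl])
  finally show ?thesis unfolding Lx_def .
qed

context classical_drg
begin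

theorem card_lines_through_vertex:
  assumes pls: "PLS V E \<gamma>" and x: "x \<in> V"
  shows "r \<le> real (card {L \<in> glines V E \<gamma>. x \<in> L})"
    and "real (card {L \<in> glines V E \<gamma>. x \<in> L}) = r \<longleftrightarrow> delsarte_vertex V E \<gamma> (bs 0) x"
proof -
  let ?Lx = "{L \<in> glines V E \<gamma>. x \<in> L}"
  have "(\<Sum>L\<in>?Lx. real (card L) - 1) = r * \<beta>"
    using card_neighbours_eq_sum_lines[OF simple pls x] card_neighbours[OF x] valency_classical
    by simp
  moreover have "real (card L) - 1 \<le> \<beta>" if "L \<in> ?Lx" for L
    using that clique_card_le glines_is_clique by force
  ultimately have bound: "r \<le> real (card ?Lx)"
    and eq: "real (card ?Lx) = r \<longleftrightarrow> (\<forall>L\<in>?Lx. real (card L) - 1 = \<beta>)"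
    using card_ge_of_bounded_sum[of ?Lx "\<lambda>L. real (card L) - 1" \<beta> r] finite_glines[OF finite_V] beta_pos
    by auto
  show "r \<le> real (card ?Lx)" by (fact bound)
  show "real (card ?Lx) = r \<longleftrightarrow> delsarte_vertex V E \<gamma> (bs 0) x"
    unfolding eq delsarte_vertex_def delsarte_clique_iff using glines_is_clique by auto
qed

end

theorem lemma10:
  fixes V :: "'a set" and E :: "'a \<Rightarrow> 'a \<Rightarrow> bool"
    and D :: nat and b :: int and \<alpha> \<beta> :: real
    and bs cs :: "nat \<Rightarrow> nat" and \<gamma> :: nat
  assumes "distance_regular V E D bs cs"
    and "classical_parameters D b \<alpha> \<beta> bs cs"
    and "b \<ge> 2" and "D \<ge> 3"
    and "\<gamma> \<ge> 3" and "PLS V E \<gamma>"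
  shows "\<forall>x\<in>V. real (card {L \<in> glines V E \<gamma>. x \<in> L}) \<ge> qbr b D \<and>
           (real (card {L \<in> glines V E \<gamma>. x \<in> L}) = qbr b D \<longleftrightarrow>
              delsarte_vertex V E \<gamma> (bs 0) x)"
proof -
  interpret classical_drg V E D bs cs b \<alpha> \<beta>
    using assms(1-4) by unfold_locales auto
  show ?thesis
    using card_lines_through_vertex[OF assms(6)] by simp
qed

end
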